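(* Let $A\in\mathbb{R}^{M\times N}$ with $M\ge N$, let $\tau\ge 0$, and let $B=\begin{bmatrix}-\tau I_M & A\\ A^T & -\tau I_N\end{bmatrix}$. Let $\widetilde U\in\mathbb{R}^{M\times k}$, $\widetilde V\in\mathbb{R}^{N\times k}$ have orthonormal columns, let $(\theta_1,c_1,d_1)$ be a singular triplet of $H=\widetilde U^TA\widetilde V$ with $\theta_1$ closest to $\tau$ among the singular values of $H$, set $\tilde u_1=\widetilde Uc_1$, $\tilde v_1=\widetilde Vd_1$, and $r=\begin{bmatrix}A\tilde v_1-\theta_1\tilde u_1\\ A^T\tilde u_1-\theta_1\tilde v_1\end{bmatrix}$. Let $\widetilde P_1\in\mathbb{R}^{M\times(M-1)}$ and $\widetilde Q_1\in\mathbb{R}^{N\times(N-1)}$ be such that $[\tilde u_1,\widetilde P_1]$ and $[\tilde v_1,\widetilde Q_1]$ are orthogonal, and set $\widetilde W_1=\begin{bmatrix}\widetilde P_1&0\\0&\widetilde Q_1\end{bmatrix}$, $$\widetilde B_1'=\widetilde W_1^TB\widetilde W_1=\begin{bmatrix}-\tau I_{M-1}&\widetilde P_1^TA\widetilde Q_1\\ \widetilde Q_1^TA^T\widetilde P_1&-\tau I_{N-1}\end{bmatrix},\qquad \widetilde B_1=\widetilde W_1\widetilde B_1'\widetilde W_1^T .$$ Consider the correction equation $$\begin{bmatrix}I-\tilde u_1\tilde u_1^T&0\\0&I-\tilde v_1\tilde v_1^T\end{bmatrix}B\begin{bmatrix}I-\tilde u_1\tilde u_1^T&0\\0&I-\tilde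 v_1\tilde v_1^T\end{bmatrix}w=-r,\qquad\text{i.e. } \widetilde B_1w=-r,$$ for $w=(s^T,t^T)^T$ with $s\perp\tilde u_1$, $t\perp\tilde v_1$. Then its solution is $w=\widetilde W_1z$, where $z\in\mathbb{R}^{M+N-2}$ solves $\widetilde B_1'z=-r'$ with $r'=\widetilde W_1^Tr$. Moreover, if MINRES is applied to $\widetilde B_1w=-r$ and to $\widetilde B_1'z=-r'$ with initial guesses $\tilde w_0$ and $\tilde z_0$ satisfying $\tilde w_0=\widetilde W_1\tilde z_0$, then the $j$th iterates satisfy $\tilde w_j=\widetilde W_1\tilde z_j$ for $j=1,2,\dots,M+N-2$, and, writing $r_{\mathrm{in},j}=\widetilde B_1\tilde w_j+r$ and $r'_{\mathrm{in},j}=\widetilde B_1'\tilde z_j+r'$, one has $\|r_{\mathrm{in},j}\|=\|r'_{\mathrm{in},j}\|$ for $j=0,1,\dots,M+N-2$.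
   Context: $\|\cdot\|$ is the Euclidean vector norm / spectral matrix norm. MINRES applied to a symmetric system $Cx=-b$ with initial guess $x_0$ produces, at step $j$, the iterate $x_j\in x_0+\mathcal{K}_j(C,Cx_0+b)$ minimizing $\|Cx+b\|$ over that affine space, where $\mathcal{K}_j(C,y)=\mathrm{span}\{y,Cy,\dots,C^{j-1}y\}$. By construction, $r$ satisfies $r_{1:M}\perp\tilde u_1$ and $r_{M+1:M+N}\perp\tilde v_1$. *)

theory Defs
  imports "Jordan_Normal_Form.Matrix"
begin

definition vnorm :: "real vec \<Rightarrow> real" where
  "vnorm v = sqrt (v \<bullet> v)"

definition outer :: "real vec \<Rightarrow> real vec \<Rightarrow> real mat" where
  "outer u v = mat (dim_vec u) (dim_vec v) (\<lambda>(i,j). u $ i * v $ j)"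

definition singular_triplet :: "real mat \<Rightarrow> real \<Rightarrow> real vec \<Rightarrow> real vec \<Rightarrow> bool" where
  "singular_triplet H \<sigma> c d \<longleftrightarrow>
     c \<in> carrier_vec (dim_row H) \<and> d \<in> carrier_vec (dim_col H) \<and>
     vnorm c = 1 \<and> vnorm d = 1 \<and> \<sigma> \<ge> 0 \<and>
     H *\<^sub>v d = \<sigma> \<cdot>\<^sub>v c \<and> transpose_mat H *\<^sub>v c = \<sigma> \<cdot>\<^sub>v d"

definition singular_values :: "real mat \<Rightarrow> real set" where
  "singular_values H = {\<sigma>. \<exists>c d. singular_triplet H \<sigma> c d}"

definition krylov :: "real mat \<Rightarrow> real vec \<Rightarrow> nat \<Rightarrow> real vec set" where
  "krylov C y j = {v. \<exists>a :: nat \<Rightarrow> real.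
      v = vec (dim_vec y) (\<lambda>l. \<Sum>i<j. a i * ((C ^\<^sub>m i) *\<^sub>v y) $ l)}"

definition minres_iterate :: "real mat \<Rightarrow> real vec \<Rightarrow> real vec \<Rightarrow> nat \<Rightarrow> real vec \<Rightarrow> bool" where
  "minres_iterate C b x0 j x \<longleftrightarrow>
     (\<exists>d \<in> krylov C (C *\<^sub>v x0 + b) j. x = x0 + d) \<and>
     (\<forall>d \<in> krylov C (C *\<^sub>v x0 + b) j. vnorm (C *\<^sub>v x + b) \<le> vnorm (C *\<^sub>v (x0 + d) + b))"

end

theory Submission
  imports Defs "Jordan_Normal_Form.Determinant"
begin

text \<open>
  Since \<open>[u1, P1]\<close> and \<open>[v1, Q1]\<close> are orthogonal, the block-diagonal matrix \<open>W1 = diag(P1, Q1)\<close>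
  has orthonormal columns and \<open>W1 W1\<^sup>T\<close> is the projector \<open>Pi\<close> onto the orthogonal complement of
  \<open>(u1, 0)\<close> and \<open>(0, v1)\<close>. Hence \<open>Pi B Pi = W1 B1' W1\<^sup>T = B1\<close> and \<open>B1 W1 = W1 B1'\<close>.
  The singular triplet equations give \<open>u1\<^sup>T A v1 = v1\<^sup>T A\<^sup>T u1 = \<theta>1\<close>, so \<open>r\<close> is orthogonal to
  \<open>(u1, 0)\<close> and \<open>(0, v1)\<close>, i.e. \<open>r = W1 r'\<close>. Multiplication by the isometry \<open>W1\<close> therefore maps
  solutions of \<open>B1' z = -r'\<close> to solutions of \<open>B1 w = -r\<close>, maps the Krylov spaces of \<open>B1'\<close> onto
  those of \<open>B1\<close> and preserves residual norms, so it maps MINRES iterates onto MINRES iterates.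
\<close>

lemma mult_mat_vec_uminus:
  "dim_vec v = dim_col (A :: 'a :: ring mat) \<Longrightarrow> A *\<^sub>v (- v) = - (A *\<^sub>v v)"
  by (intro eq_vecI) (auto simp: scalar_prod_def sum_negf[symmetric])

lemma vnorm_eq_1_iff: "vnorm x = 1 \<longleftrightarrow> x \<bullet> x = 1"
  unfolding vnorm_def by simp

lemma isometry_left_inverse_vec:
  fixes W :: "'a :: comm_semiring_1 mat"
  assumes W: "W \<in> carrier_mat n m" and WtW: "transpose_mat W * W = 1\<^sub>m m" and x: "x \<in> carrier_vec m"
  shows "transpose_mat W *\<^sub>v (W *\<^sub>v x) = x"
proof -
  have "transpose_mat W *\<^sub>v (W *\<^sub>v x) = (transpose_mat W * W) *\<^sub>v x"
    by (rule assoc_mult_mat_vec[symmetric, of _ m n _ m]) (use W x in auto)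
  then show ?thesis
    using WtW x by simp
qed

lemma isometry_mult_mat_vec_inject:
  fixes W :: "'a :: comm_semiring_1 mat"
  assumes W: "W \<in> carrier_mat n m" and WtW: "transpose_mat W * W = 1\<^sub>m m"
    and x: "x \<in> carrier_vec m" and y: "y \<in> carrier_vec m"
  shows "W *\<^sub>v x = W *\<^sub>v y \<longleftrightarrow> x = y"
  using isometry_left_inverse_vec[OF W WtW x] isometry_left_inverse_vec[OF W WtW y] by metis

lemma isometry_vnorm:
  assumes W: "W \<in> carrier_mat n m" and WtW: "transpose_mat W * W = 1\<^sub>m m" and x: "x \<in> carrier_vec m"
  shows "vnorm (W *\<^sub>v x) = vnorm x"
proof -
  have "(W *\<^sub>v x) \<bullet> (W *\<^sub>v x) = (transpose_mat W *\<^sub>v (W *\<^sub>v x)) \<bullet> x"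
    by (rule transpose_vec_mult_scalar[OF W x, symmetric]) (use W x in simp)
  then show ?thesis
    unfolding vnorm_def isometry_left_inverse_vec[OF W WtW x] by simp
qed

section \<open>Intertwined matrices, Krylov subspaces and MINRES\<close>

lemma krylov_carrier: "v \<in> krylov C y j \<Longrightarrow> v \<in> carrier_vec (dim_vec y)"
  unfolding krylov_def by auto

lemma mult_mat_vec_lincomb:
  fixes W :: "'a :: comm_semiring_0 mat"
  assumes W: "W \<in> carrier_mat n m" and v: "\<And>i. v i \<in> carrier_vec m"
  shows "vec n (\<lambda>l. \<Sum>i<j. a i * (W *\<^sub>v v i) $ l) = W *\<^sub>v vec m (\<lambda>l. \<Sum>i<j. a i * v i $ l)"
proof (rule eq_vecI)
  fix l assume "l < dim_vec (W *\<^sub>v vec m (\<lambda>l. \<Sum>i<j. a i * v i $ l))"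
  then have l: "l < n" using W by simp
  have v_dim: "dim_vec (v i) = m" for i
    using v[of i] by simp
  have "(\<Sum>i<j. a i * (W *\<^sub>v v i) $ l) = (\<Sum>i<j. \<Sum>k<m. a i * (W $$ (l, k) * v i $ k))"
    using W v_dim l by (auto simp: scalar_prod_def sum_distrib_left lessThan_atLeast0 intro!: sum.cong)
  also have "\<dots> = (\<Sum>k<m. \<Sum>i<j. W $$ (l, k) * (a i * v i $ k))"
    by (subst sum.swap) (simp add: mult_ac)
  also have "\<dots> = (W *\<^sub>v vec m (\<lambda>l. \<Sum>i<j. a i * v i $ l)) $ l"
    using W l by (auto simp: scalar_prod_def sum_distrib_left lessThan_atLeast0 intro!: sum.cong)
  finally show "vec n (\<lambda>l. \<Sum>i<j. a i * (W *\<^sub>v v i) $ l) $ l = (W *\<^sub>v vec m (\<lambda>l. \<Sum>i<j. a i * v i $ l)) $ l"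
    using l by simp
qed (use W in simp)

lemma intertwine_mult_mat_vec:
  fixes C :: "'a :: semiring_0 mat"
  assumes C: "C \<in> carrier_mat n n" and C': "C' \<in> carrier_mat m m" and W: "W \<in> carrier_mat n m"
    and CW: "C * W = W * C'" and x: "x \<in> carrier_vec m"
  shows "C *\<^sub>v (W *\<^sub>v x) = W *\<^sub>v (C' *\<^sub>v x)"
proof -
  have "C *\<^sub>v (W *\<^sub>v x) = (C * W) *\<^sub>v x"
    by (rule assoc_mult_mat_vec[symmetric, of _ n n _ m]) (use C W x in auto)
  also have "\<dots> = W *\<^sub>v (C' *\<^sub>v x)"
    unfolding CW by (rule assoc_mult_mat_vec[of _ n m _ m]) (use W C' x in auto)
  finally show ?thesis .
qed

lemma pow_mat_intertwine:
  fixes C :: "'a :: semiring_1 mat"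
  assumes C: "C \<in> carrier_mat n n" and C': "C' \<in> carrier_mat m m" and W: "W \<in> carrier_mat n m"
    and CW: "C * W = W * C'"
  shows "C ^\<^sub>m i * W = W * C' ^\<^sub>m i"
proof (induction i)
  case (Suc i)
  have "C ^\<^sub>m Suc i * W = C ^\<^sub>m i * (C * W)"
    using C W by (simp add: assoc_mult_mat[of _ n n _ n _ m])
  also have "\<dots> = (C ^\<^sub>m i * W) * C'"
    unfolding CW using C C' W by (simp add: assoc_mult_mat[of _ n n _ m _ m])
  also have "\<dots> = W * C' ^\<^sub>m Suc i"
    unfolding Suc using C' W by (simp add: assoc_mult_mat[of _ n m _ m _ m])
  finally show ?case .
qed (use C C' W in simp)

lemma krylov_intertwine:
  fixes C :: "real mat"
  assumes C: "C \<in> carrier_mat n n" and C': "C' \<in> carrier_mat m m" and W: "W \<in> carrier_mat n m"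
    and CW: "C * W = W * C'" and y: "y \<in> carrier_vec m"
  shows "krylov C (W *\<^sub>v y) j = (\<lambda>d. W *\<^sub>v d) ` krylov C' y j"
proof -
  have pow: "(C ^\<^sub>m i) *\<^sub>v (W *\<^sub>v y) = W *\<^sub>v ((C' ^\<^sub>m i) *\<^sub>v y)" for i
    using intertwine_mult_mat_vec[OF pow_carrier_mat[OF C] pow_carrier_mat[OF C'] W
        pow_mat_intertwine[OF C C' W CW] y] .
  have "vec (dim_vec (W *\<^sub>v y)) (\<lambda>l. \<Sum>i<j. a i * ((C ^\<^sub>m i) *\<^sub>v (W *\<^sub>v y)) $ l)
      = W *\<^sub>v vec (dim_vec y) (\<lambda>l. \<Sum>i<j. a i * ((C' ^\<^sub>m i) *\<^sub>v y) $ l)" for a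
    unfolding pow using W y
    by (simp, intro mult_mat_vec_lincomb[OF W] mult_mat_vec_carrier[OF pow_carrier_mat[OF C'] y])
  then show ?thesis
    unfolding krylov_def by auto
qed

lemma intertwine_residual:
  fixes C :: "'a :: comm_semiring_1 mat"
  assumes C: "C \<in> carrier_mat n n" and C': "C' \<in> carrier_mat m m" and W: "W \<in> carrier_mat n m"
    and CW: "C * W = W * C'" and b': "b' \<in> carrier_vec m" and x: "x \<in> carrier_vec m"
  shows "C *\<^sub>v (W *\<^sub>v x) + W *\<^sub>v b' = W *\<^sub>v (C' *\<^sub>v x + b')"
  using intertwine_mult_mat_vec[OF C C' W CW x] C' W b' x
  by (simp add: mult_add_distrib_mat_vec[OF W])

lemma intertwine_residual_norm:
  assumes C: "C \<in> carrier_mat n n" and C': "C' \<in> carrier_mat m m" and W: "W \<in> carrier_mat n m"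
    and WtW: "transpose_mat W * W = 1\<^sub>m m" and CW: "C * W = W * C'"
    and b': "b' \<in> carrier_vec m" and x: "x \<in> carrier_vec m"
  shows "vnorm (C *\<^sub>v (W *\<^sub>v x) + W *\<^sub>v b') = vnorm (C' *\<^sub>v x + b')"
  using intertwine_residual[OF C C' W CW b' x] isometry_vnorm[OF W WtW] C' b' x by simp

lemma intertwine_solution_iff:
  fixes C :: "'a :: comm_ring_1 mat"
  assumes C: "C \<in> carrier_mat n n" and C': "C' \<in> carrier_mat m m" and W: "W \<in> carrier_mat n m"
    and WtW: "transpose_mat W * W = 1\<^sub>m m" and CW: "C * W = W * C'"
    and b': "b' \<in> carrier_vec m" and z: "z \<in> carrier_vec m"
  shows "C *\<^sub>v (W *\<^sub>v z) = - (W *\<^sub>v b') \<longleftrightarrow> C' *\<^sub>v z = - b'"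
proof -
  have "C *\<^sub>v (W *\<^sub>v z) = W *\<^sub>v (C' *\<^sub>v z)"
    by (rule intertwine_mult_mat_vec[OF C C' W CW z])
  moreover have "- (W *\<^sub>v b') = W *\<^sub>v (- b')"
    using mult_mat_vec_uminus[of b' W] W b' by simp
  ultimately show ?thesis
    using isometry_mult_mat_vec_inject[OF W WtW] C' z b' by simp
qed

lemma minres_iterate_intertwine:
  assumes C: "C \<in> carrier_mat n n" and C': "C' \<in> carrier_mat m m" and W: "W \<in> carrier_mat n m"
    and WtW: "transpose_mat W * W = 1\<^sub>m m" and CW: "C * W = W * C'"
    and b': "b' \<in> carrier_vec m" and x0: "x0 \<in> carrier_vec m"
  shows "minres_iterate C (W *\<^sub>v b') (W *\<^sub>v x0) j w \<longleftrightarrow> (\<exists>x. w = W *\<^sub>v x \<and> minres_iterate C' b' x0 j x)"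
proof -
  let ?K' = "krylov C' (C' *\<^sub>v x0 + b') j"
  have K: "krylov C (C *\<^sub>v (W *\<^sub>v x0) + W *\<^sub>v b') j = (\<lambda>d. W *\<^sub>v d) ` ?K'"
    unfolding intertwine_residual[OF C C' W CW b' x0] using C' b' x0
    by (intro krylov_intertwine[OF C C' W CW]) simp
  have K'_carrier: "d \<in> carrier_vec m" if "d \<in> ?K'" for d
    using krylov_carrier[OF that] C' b' by simp
  have shift: "W *\<^sub>v x0 + W *\<^sub>v d = W *\<^sub>v (x0 + d)" if "d \<in> ?K'" for d
    using mult_add_distrib_mat_vec[OF W x0 K'_carrier[OF that]] by simp
  have norm: "vnorm (C *\<^sub>v (W *\<^sub>v (x0 + d)) + W *\<^sub>v b') = vnorm (C' *\<^sub>v (x0 + d) + b')" if "d \<in> ?K'" for d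
    using intertwine_residual_norm[OF C C' W WtW CW b'] x0 K'_carrier[OF that] by simp
  have iterate_iff: "minres_iterate C (W *\<^sub>v b') (W *\<^sub>v x0) j (W *\<^sub>v (x0 + d)) \<longleftrightarrow>
      minres_iterate C' b' x0 j (x0 + d)" if "d \<in> ?K'" for d
    unfolding minres_iterate_def K using that by (auto simp: shift norm)
  have "minres_iterate C (W *\<^sub>v b') (W *\<^sub>v x0) j w \<Longrightarrow> \<exists>d \<in> ?K'. w = W *\<^sub>v (x0 + d)"
    unfolding minres_iterate_def K by (auto simp: shift)
  moreover have "minres_iterate C' b' x0 j x \<Longrightarrow> \<exists>d \<in> ?K'. x = x0 + d" for x
    unfolding minres_iterate_def by auto
  ultimately show ?thesis
    using iterate_iff by blast
qed

lemma minres_iterate_residual_norm_eq: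
  assumes x: "minres_iterate C b x0 j x" and y: "minres_iterate C b x0 j y"
  shows "vnorm (C *\<^sub>v x + b) = vnorm (C *\<^sub>v y + b)"
proof -
  obtain d e where "d \<in> krylov C (C *\<^sub>v x0 + b) j" "x = x0 + d"
    and "e \<in> krylov C (C *\<^sub>v x0 + b) j" "y = x0 + e"
    using x y unfolding minres_iterate_def by blast
  with x y show ?thesis
    unfolding minres_iterate_def by (blast intro: order_antisym)
qed

lemma conj_isometry_intertwine:
  fixes W :: "'a :: comm_semiring_1 mat"
  assumes W: "W \<in> carrier_mat n m" and WtW: "transpose_mat W * W = 1\<^sub>m m" and C': "C' \<in> carrier_mat m m"
  shows "W * C' * transpose_mat W * W = W * C'"
proof -
  have "W * C' * transpose_mat W * W = W * C' * (transpose_mat W * W)"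
    by (rule assoc_mult_mat[of _ n m _ n _ m]) (use W C' in auto)
  then show ?thesis
    using WtW W C' by simp
qed

lemma compressed_system_solutions:
  fixes W B :: "real mat"
  assumes W: "W \<in> carrier_mat n m" and WtW: "transpose_mat W * W = 1\<^sub>m m"
    and B: "B \<in> carrier_mat n n" and r: "r \<in> carrier_vec n"
    and r_range: "W *\<^sub>v (transpose_mat W *\<^sub>v r) = r"
  defines "B1' \<equiv> transpose_mat W * B * W" and "B1 \<equiv> W * (transpose_mat W * B * W) * transpose_mat W"
    and "r' \<equiv> transpose_mat W *\<^sub>v r"
  shows "W * transpose_mat W * B * (W * transpose_mat W) = B1"
    and "z \<in> carrier_vec m \<Longrightarrow> B1 *\<^sub>v (W *\<^sub>v z) = - r \<longleftrightarrow> B1' *\<^sub>v z = - r'"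
    and "x \<in> carrier_vec n \<Longrightarrow> W *\<^sub>v (transpose_mat W *\<^sub>v x) = x \<Longrightarrow>
      B1 *\<^sub>v x = - r \<longleftrightarrow> (\<exists>z \<in> carrier_vec m. x = W *\<^sub>v z \<and> B1' *\<^sub>v z = - r')"
proof -
  have Wt: "transpose_mat W \<in> carrier_mat m n"
    using W by simp
  have B1': "B1' \<in> carrier_mat m m"
    unfolding B1'_def using W B by simp
  have B1: "B1 \<in> carrier_mat n n"
    unfolding B1_def B1'_def[symmetric] using W B1' by simp
  have r': "r' \<in> carrier_vec m"
    unfolding r'_def using W r by simp
  have assoc_left: "W * transpose_mat W * B = W * (transpose_mat W * B)"
    by (rule assoc_mult_mat) (use W B in auto)
  have assoc_right: "W * (transpose_mat W * B) * W = W * (transpose_mat W * B * W)"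
    by (rule assoc_mult_mat) (use W B in auto)
  have "W * transpose_mat W * B * (W * transpose_mat W) = W * transpose_mat W * B * W * transpose_mat W"
    by (rule assoc_mult_mat[symmetric]) (use W B in auto)
  also have "\<dots> = B1"
    unfolding B1_def assoc_left assoc_right ..
  finally show "W * transpose_mat W * B * (W * transpose_mat W) = B1" .
  have solution_iff: "B1 *\<^sub>v (W *\<^sub>v z) = - r \<longleftrightarrow> B1' *\<^sub>v z = - r'" if z: "z \<in> carrier_vec m" for z
    using intertwine_solution_iff[OF B1 B1' W WtW _ r' z] conj_isometry_intertwine[OF W WtW B1']
    unfolding B1_def B1'_def[symmetric] r'_def r_range by simp
  then show "z \<in> carrier_vec m \<Longrightarrow> B1 *\<^sub>v (W *\<^sub>v z) = - r \<longleftrightarrow> B1' *\<^sub>v z = - r'" for z .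
  show "B1 *\<^sub>v x = - r \<longleftrightarrow> (\<exists>z \<in> carrier_vec m. x = W *\<^sub>v z \<and> B1' *\<^sub>v z = - r')"
    if x: "x \<in> carrier_vec n" and x_range: "W *\<^sub>v (transpose_mat W *\<^sub>v x) = x"
  proof
    have Wtx: "transpose_mat W *\<^sub>v x \<in> carrier_vec m"
      using Wt x by simp
    assume "B1 *\<^sub>v x = - r"
    then have "B1' *\<^sub>v (transpose_mat W *\<^sub>v x) = - r'"
      using solution_iff[OF Wtx] x_range by simp
    then show "\<exists>z \<in> carrier_vec m. x = W *\<^sub>v z \<and> B1' *\<^sub>v z = - r'"
      using Wtx x_range by metis
  next
    assume "\<exists>z \<in> carrier_vec m. x = W *\<^sub>v z \<and> B1' *\<^sub>v z = - r'"
    then show "B1 *\<^sub>v x = - r"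
      using solution_iff by blast
  qed
qed

lemma compressed_minres:
  fixes W B :: "real mat"
  assumes W: "W \<in> carrier_mat n m" and WtW: "transpose_mat W * W = 1\<^sub>m m"
    and B: "B \<in> carrier_mat n n" and r: "r \<in> carrier_vec n"
    and r_range: "W *\<^sub>v (transpose_mat W *\<^sub>v r) = r" and z0: "z0 \<in> carrier_vec m"
  defines "B1' \<equiv> transpose_mat W * B * W" and "B1 \<equiv> W * (transpose_mat W * B * W) * transpose_mat W"
    and "r' \<equiv> transpose_mat W *\<^sub>v r"
  shows "minres_iterate B1 r (W *\<^sub>v z0) j w \<longleftrightarrow> (\<exists>z. w = W *\<^sub>v z \<and> minres_iterate B1' r' z0 j z)"
    and "minres_iterate B1 r (W *\<^sub>v z0) j w \<Longrightarrow> minres_iterate B1' r' z0 j z \<Longrightarrow>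
      vnorm (B1 *\<^sub>v w + r) = vnorm (B1' *\<^sub>v z + r')"
proof -
  have B1': "B1' \<in> carrier_mat m m"
    unfolding B1'_def using W B by simp
  have B1: "B1 \<in> carrier_mat n n"
    unfolding B1_def B1'_def[symmetric] using W B1' by simp
  have r': "r' \<in> carrier_vec m"
    unfolding r'_def using W r by simp
  have B1W: "B1 * W = W * B1'"
    unfolding B1_def B1'_def[symmetric] by (rule conj_isometry_intertwine[OF W WtW B1'])
  have r_eq: "r = W *\<^sub>v r'"
    unfolding r'_def r_range ..
  show iterates: "minres_iterate B1 r (W *\<^sub>v z0) j w \<longleftrightarrow> (\<exists>z. w = W *\<^sub>v z \<and> minres_iterate B1' r' z0 j z)" for w
    unfolding r_eq by (rule minres_iterate_intertwine[OF B1 B1' W WtW B1W r' z0])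
  assume w: "minres_iterate B1 r (W *\<^sub>v z0) j w" and z: "minres_iterate B1' r' z0 j z"
  then obtain z1 where w_eq: "w = W *\<^sub>v z1" and z1: "minres_iterate B1' r' z0 j z1"
    using iterates by blast
  have "z1 \<in> carrier_vec m"
    using z1 z0 r' B1' unfolding minres_iterate_def by (auto dest!: krylov_carrier)
  then have "vnorm (B1 *\<^sub>v w + r) = vnorm (B1' *\<^sub>v z1 + r')"
    unfolding w_eq r_eq by (rule intertwine_residual_norm[OF B1 B1' W WtW B1W r'])
  also have "\<dots> = vnorm (B1' *\<^sub>v z + r')"
    by (rule minres_iterate_residual_norm_eq[OF z1 z])
  finally show "vnorm (B1 *\<^sub>v w + r) = vnorm (B1' *\<^sub>v z + r')" .
qed

section \<open>Orthogonal completions and the block-diagonal basis\<close>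

lemma orthogonal_completion:
  fixes u :: "real vec" and P :: "real mat"
  assumes u: "u \<in> carrier_vec n" and P: "P \<in> carrier_mat n (n - 1)"
    and orth: "transpose_mat (mat_of_cols n (u # cols P)) * mat_of_cols n (u # cols P) = 1\<^sub>m n"
  shows "0 < n" and "u \<bullet> u = 1" and "transpose_mat P * P = 1\<^sub>m (n - 1)"
    and "transpose_mat P *\<^sub>v u = 0\<^sub>v (n - 1)"
proof -
  let ?X = "mat_of_cols n (u # cols P)"
  have "Suc (n - 1) = n"
    using arg_cong[OF orth, of dim_row] P by simp
  then show n: "0 < n"
    by simp
  have col_prod: "col ?X a \<bullet> col ?X b = (if a = b then 1 else 0)" if "a < n" "b < n" for a b
    using arg_cong[OF orth, of "\<lambda>X. X $$ (a, b)"] that P by simp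
  have col_0: "col ?X 0 = u"
    using u by simp
  have col_Suc: "col ?X (Suc l) = col P l" if "l < n - 1" for l
    using that P by simp
  show "u \<bullet> u = 1"
    using col_prod[of 0 0] col_0 n by simp
  show "transpose_mat P * P = 1\<^sub>m (n - 1)"
  proof (rule eq_matI)
    fix a b assume "a < dim_row (1\<^sub>m (n - 1) :: real mat)" "b < dim_col (1\<^sub>m (n - 1) :: real mat)"
    then have ab: "a < n - 1" "b < n - 1"
      by auto
    then show "(transpose_mat P * P) $$ (a, b) = 1\<^sub>m (n - 1) $$ (a, b)"
      using col_prod[of "Suc a" "Suc b"] col_Suc P by simp
  qed (use P in auto)
  show "transpose_mat P *\<^sub>v u = 0\<^sub>v (n - 1)"
  proof (rule eq_vecI)
    fix l assume "l < dim_vec (0\<^sub>v (n - 1) :: real vec)"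
    then have l: "l < n - 1"
      by simp
    then show "(transpose_mat P *\<^sub>v u) $ l = 0\<^sub>v (n - 1) $ l"
      using col_prod[of "Suc l" 0] col_Suc col_0 P by simp
  qed (use P in auto)
qed

lemma outer_carrier_mat[simp]: "u \<in> carrier_vec n \<Longrightarrow> outer u u \<in> carrier_mat n n"
  by (simp add: outer_def)

lemma orthogonal_completion_projector:
  fixes u :: "real vec" and P :: "real mat"
  assumes u: "u \<in> carrier_vec n" and P: "P \<in> carrier_mat n (n - 1)"
    and orth: "transpose_mat (mat_of_cols n (u # cols P)) * mat_of_cols n (u # cols P) = 1\<^sub>m n"
  shows "P * transpose_mat P = 1\<^sub>m n - outer u u"
proof -
  define X where "X = mat_of_cols n (u # cols P)"
  have n: "Suc (n - 1) = n"
    using orthogonal_completion(1)[OF u P orth] by simp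
  have X: "X \<in> carrier_mat n n"
    unfolding X_def using mat_of_cols_carrier(1)[of n "u # cols P"] P n by simp
  have XXt: "X * transpose_mat X = 1\<^sub>m n"
    by (rule mat_mult_left_right_inverse[OF _ X orth[folded X_def]]) (use X in simp)
  have X_0: "X $$ (i, 0) = u $ i" if "i < n" for i
    using that P n unfolding X_def mat_of_cols_def by auto
  have X_Suc: "X $$ (i, Suc l) = P $$ (i, l)" if "i < n" "l < n - 1" for i l
    using that P n unfolding X_def mat_of_cols_def by auto
  show ?thesis
  proof (rule eq_matI)
    fix i j assume "i < dim_row (1\<^sub>m n - outer u u)" "j < dim_col (1\<^sub>m n - outer u u)"
    then have ij: "i < n" "j < n"
      using u by (auto simp: outer_def)
    have "(if i = j then 1 else 0) = (X * transpose_mat X) $$ (i, j)"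
      using XXt ij by simp
    also have "\<dots> = (\<Sum>l<Suc (n - 1). X $$ (i, l) * X $$ (j, l))"
      using X ij n by (simp add: scalar_prod_def lessThan_atLeast0)
    also have "\<dots> = u $ i * u $ j + (\<Sum>l<n - 1. P $$ (i, l) * P $$ (j, l))"
      unfolding sum.lessThan_Suc_shift using X_0 X_Suc ij by simp
    finally have "(\<Sum>l<n - 1. P $$ (i, l) * P $$ (j, l)) = (if i = j then 1 else 0) - u $ i * u $ j"
      by simp
    then show "(P * transpose_mat P) $$ (i, j) = (1\<^sub>m n - outer u u) $$ (i, j)"
      using P u ij by (simp add: outer_def scalar_prod_def lessThan_atLeast0)
  qed (use P u in \<open>auto simp: outer_def\<close>)
qed

lemma outer_mult_mat_vec:
  assumes "u \<in> carrier_vec n" and "x \<in> carrier_vec n"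
  shows "outer u u *\<^sub>v x = (u \<bullet> x) \<cdot>\<^sub>v u"
  by (rule eq_vecI) (use assms in \<open>auto simp: outer_def scalar_prod_def sum_distrib_left mult_ac\<close>)

lemma projector_fixes_orthogonal:
  assumes u: "u \<in> carrier_vec n" and x: "x \<in> carrier_vec n" and xu: "x \<bullet> u = 0"
  shows "(1\<^sub>m n - outer u u) *\<^sub>v x = x"
proof -
  have "(1\<^sub>m n - outer u u) *\<^sub>v x = x - (u \<bullet> x) \<cdot>\<^sub>v u"
    using minus_mult_distrib_mat_vec[OF one_carrier_mat outer_carrier_mat[OF u] x]
      outer_mult_mat_vec[OF u x] x by simp
  also have "\<dots> = x"
    using xu comm_scalar_prod[OF x u] x u by (intro eq_vecI) auto
  finally show ?thesis .
qed

lemma block_projector_fixes_orthogonal: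
  assumes u: "u \<in> carrier_vec m1" and v: "v \<in> carrier_vec m2"
    and s: "s \<in> carrier_vec m1" and t: "t \<in> carrier_vec m2" and "s \<bullet> u = 0" and "t \<bullet> v = 0"
  shows "four_block_mat (1\<^sub>m m1 - outer u u) (0\<^sub>m m1 m2) (0\<^sub>m m2 m1) (1\<^sub>m m2 - outer v v) *\<^sub>v (s @\<^sub>v t) = s @\<^sub>v t"
  using assms by (subst mult_mat_vec_split[of _ m1 _ m2])
    (auto simp: projector_fixes_orthogonal intro!: minus_carrier_mat)

lemma mult_mat_vec_orthogonal:
  fixes P :: "'a :: comm_semiring_0 mat"
  assumes P: "P \<in> carrier_mat m n" and a: "a \<in> carrier_vec n" and u: "u \<in> carrier_vec m"
    and Pu: "transpose_mat P *\<^sub>v u = 0\<^sub>v n"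
  shows "(P *\<^sub>v a) \<bullet> u = 0"
proof -
  have "(P *\<^sub>v a) \<bullet> u = (transpose_mat P *\<^sub>v u) \<bullet> a"
    using transpose_vec_mult_scalar[OF P a u] comm_scalar_prod[of "P *\<^sub>v a" m u] P a u by simp
  then show ?thesis
    using Pu a by simp
qed

lemma block_diag_gram:
  fixes P Q :: "'a :: comm_semiring_1 mat"
  assumes P: "P \<in> carrier_mat m1 n1" and Q: "Q \<in> carrier_mat m2 n2"
  shows "transpose_mat (four_block_mat P (0\<^sub>m m1 n2) (0\<^sub>m m2 n1) Q) * four_block_mat P (0\<^sub>m m1 n2) (0\<^sub>m m2 n1) Q
    = four_block_mat (transpose_mat P * P) (0\<^sub>m n1 n2) (0\<^sub>m n2 n1) (transpose_mat Q * Q)"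
  unfolding transpose_four_block_mat[OF P zero_carrier_mat zero_carrier_mat Q]
  by (subst mult_four_block_mat[of _ n1 m1 _ m2 _ n2 _ _ n1 _ n2]) (use P Q in auto)

lemma block_diag_outer:
  fixes P Q :: "'a :: comm_semiring_1 mat"
  assumes P: "P \<in> carrier_mat m1 n1" and Q: "Q \<in> carrier_mat m2 n2"
  shows "four_block_mat P (0\<^sub>m m1 n2) (0\<^sub>m m2 n1) Q * transpose_mat (four_block_mat P (0\<^sub>m m1 n2) (0\<^sub>m m2 n1) Q)
    = four_block_mat (P * transpose_mat P) (0\<^sub>m m1 m2) (0\<^sub>m m2 m1) (Q * transpose_mat Q)"
  unfolding transpose_four_block_mat[OF P zero_carrier_mat zero_carrier_mat Q]
  by (subst mult_four_block_mat[of _ m1 n1 _ n2 _ m2 _ _ m1 _ m2]) (use P Q in auto)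

lemma block_diag_congruence:
  fixes P Q :: "'a :: comm_semiring_1 mat"
  assumes P: "P \<in> carrier_mat m1 n1" and Q: "Q \<in> carrier_mat m2 n2"
    and X: "X \<in> carrier_mat m1 m1" and Y: "Y \<in> carrier_mat m1 m2"
    and Z: "Z \<in> carrier_mat m2 m1" and T: "T \<in> carrier_mat m2 m2"
  shows "transpose_mat (four_block_mat P (0\<^sub>m m1 n2) (0\<^sub>m m2 n1) Q) * four_block_mat X Y Z T
      * four_block_mat P (0\<^sub>m m1 n2) (0\<^sub>m m2 n1) Q
    = four_block_mat (transpose_mat P * X * P) (transpose_mat P * Y * Q)
        (transpose_mat Q * Z * P) (transpose_mat Q * T * Q)"
proof -
  have "transpose_mat (four_block_mat P (0\<^sub>m m1 n2) (0\<^sub>m m2 n1) Q) * four_block_mat X Y Z T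
      = four_block_mat (transpose_mat P * X) (transpose_mat P * Y) (transpose_mat Q * Z) (transpose_mat Q * T)"
    unfolding transpose_four_block_mat[OF P zero_carrier_mat zero_carrier_mat Q]
    by (subst mult_four_block_mat[of _ n1 m1 _ m2 _ n2 _ _ m1 _ m2]) (use assms in auto)
  then show ?thesis
    by (simp, subst mult_four_block_mat[of _ n1 m1 _ m2 _ n2 _ _ n1 _ n2]) (use assms in auto)
qed

lemma saddle_block_compression:
  fixes A P Q :: "'a :: comm_ring_1 mat"
  assumes A: "A \<in> carrier_mat m1 m2" and P: "P \<in> carrier_mat m1 n1" and Q: "Q \<in> carrier_mat m2 n2"
    and PtP: "transpose_mat P * P = 1\<^sub>m n1" and QtQ: "transpose_mat Q * Q = 1\<^sub>m n2"
  shows "transpose_mat (four_block_mat P (0\<^sub>m m1 n2) (0\<^sub>m m2 n1) Q)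
      * four_block_mat (c \<cdot>\<^sub>m 1\<^sub>m m1) A (transpose_mat A) (c \<cdot>\<^sub>m 1\<^sub>m m2)
      * four_block_mat P (0\<^sub>m m1 n2) (0\<^sub>m m2 n1) Q
    = four_block_mat (c \<cdot>\<^sub>m 1\<^sub>m n1) (transpose_mat P * A * Q)
        (transpose_mat Q * transpose_mat A * P) (c \<cdot>\<^sub>m 1\<^sub>m n2)"
proof -
  have scaled_identity: "transpose_mat X * (c \<cdot>\<^sub>m 1\<^sub>m m) * X = c \<cdot>\<^sub>m 1\<^sub>m n"
    if X: "X \<in> carrier_mat m n" and XtX: "transpose_mat X * X = 1\<^sub>m n" for X :: "'a mat" and m n
  proof -
    have "transpose_mat X * (c \<cdot>\<^sub>m 1\<^sub>m m) = c \<cdot>\<^sub>m transpose_mat X"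
      using mult_smult_distrib[of "transpose_mat X" n m "1\<^sub>m m" m c] X by simp
    then show ?thesis
      using mult_smult_assoc_mat[of "transpose_mat X" n m X n c] X XtX by simp
  qed
  show ?thesis
    using block_diag_congruence[OF P Q, of "c \<cdot>\<^sub>m 1\<^sub>m m1" A "transpose_mat A" "c \<cdot>\<^sub>m 1\<^sub>m m2"]
      scaled_identity[OF P PtP] scaled_identity[OF Q QtQ] A by simp
qed

lemma deflation_basis:
  fixes u v :: "real vec" and P Q :: "real mat"
  assumes u: "u \<in> carrier_vec M" and P: "P \<in> carrier_mat M (M - 1)"
    and orthP: "transpose_mat (mat_of_cols M (u # cols P)) * mat_of_cols M (u # cols P) = 1\<^sub>m M"
    and v: "v \<in> carrier_vec N" and Q: "Q \<in> carrier_mat N (N - 1)"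
    and orthQ: "transpose_mat (mat_of_cols N (v # cols Q)) * mat_of_cols N (v # cols Q) = 1\<^sub>m N"
  defines "W \<equiv> four_block_mat P (0\<^sub>m M (N - 1)) (0\<^sub>m N (M - 1)) Q"
  shows "W \<in> carrier_mat (M + N) (M + N - 2)"
    and "transpose_mat W * W = 1\<^sub>m (M + N - 2)"
    and "W * transpose_mat W = four_block_mat (1\<^sub>m M - outer u u) (0\<^sub>m M N) (0\<^sub>m N M) (1\<^sub>m N - outer v v)"
    and "z \<in> carrier_vec (M + N - 2) \<Longrightarrow>
      \<exists>s t. s \<in> carrier_vec M \<and> t \<in> carrier_vec N \<and> s \<bullet> u = 0 \<and> t \<bullet> v = 0 \<and> W *\<^sub>v z = s @\<^sub>v t"
proof -
  note P_cols = orthogonal_completion[OF u P orthP]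
  note Q_cols = orthogonal_completion[OF v Q orthQ]
  have dim: "M - 1 + (N - 1) = M + N - 2"
    using P_cols(1) Q_cols(1) by linarith
  show "W \<in> carrier_mat (M + N) (M + N - 2)"
    unfolding W_def dim[symmetric] using P Q by simp
  show "transpose_mat W * W = 1\<^sub>m (M + N - 2)"
    unfolding W_def dim[symmetric] block_diag_gram[OF P Q] P_cols(3) Q_cols(3) by simp
  show "W * transpose_mat W = four_block_mat (1\<^sub>m M - outer u u) (0\<^sub>m M N) (0\<^sub>m N M) (1\<^sub>m N - outer v v)"
    unfolding W_def block_diag_outer[OF P Q] orthogonal_completion_projector[OF u P orthP]
      orthogonal_completion_projector[OF v Q orthQ] ..
  assume z: "z \<in> carrier_vec (M + N - 2)"
  define a d where "a = vec_first z (M - 1)" and "d = vec_last z (N - 1)"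
  have a: "a \<in> carrier_vec (M - 1)" and d: "d \<in> carrier_vec (N - 1)"
    unfolding a_def d_def by simp_all
  have z_split: "z = a @\<^sub>v d"
    unfolding a_def d_def using z dim by simp
  have "W *\<^sub>v z = (P *\<^sub>v a) @\<^sub>v (Q *\<^sub>v d)"
    unfolding W_def z_split by (subst four_block_mat_mult_vec[OF P _ _ Q a d]) (use P Q a d in auto)
  moreover have "(P *\<^sub>v a) \<bullet> u = 0" and "(Q *\<^sub>v d) \<bullet> v = 0"
    using mult_mat_vec_orthogonal[OF P a u P_cols(4)] mult_mat_vec_orthogonal[OF Q d v Q_cols(4)] .
  ultimately show "\<exists>s t. s \<in> carrier_vec M \<and> t \<in> carrier_vec N \<and> s \<bullet> u = 0 \<and> t \<bullet> v = 0 \<and> W *\<^sub>v z = s @\<^sub>v t"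
    using mult_mat_vec_carrier[OF P a] mult_mat_vec_carrier[OF Q d] by blast
qed

lemma complement_in_range:
  fixes W :: "real mat"
  assumes W: "W \<in> carrier_mat (M + N) m"
    and WWt: "W * transpose_mat W = four_block_mat (1\<^sub>m M - outer u u) (0\<^sub>m M N) (0\<^sub>m N M) (1\<^sub>m N - outer v v)"
    and u: "u \<in> carrier_vec M" and v: "v \<in> carrier_vec N"
    and s: "s \<in> carrier_vec M" and t: "t \<in> carrier_vec N" and su: "s \<bullet> u = 0" and tv: "t \<bullet> v = 0"
  shows "W *\<^sub>v (transpose_mat W *\<^sub>v (s @\<^sub>v t)) = s @\<^sub>v t"
proof -
  have "W *\<^sub>v (transpose_mat W *\<^sub>v (s @\<^sub>v t)) = (W * transpose_mat W) *\<^sub>v (s @\<^sub>v t)"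
    by (rule assoc_mult_mat_vec[symmetric, of _ "M + N" m _ "M + N"]) (use W s t in auto)
  then show ?thesis
    unfolding WWt block_projector_fixes_orthogonal[OF u v s t su tv] .
qed

section \<open>The correction equation\<close>

lemma projected_correction_equation:
  fixes W B :: "real mat" and u v r :: "real vec"
  assumes W: "W \<in> carrier_mat (M + N) m" and WtW: "transpose_mat W * W = 1\<^sub>m m"
    and WWt: "W * transpose_mat W = four_block_mat (1\<^sub>m M - outer u u) (0\<^sub>m M N) (0\<^sub>m N M) (1\<^sub>m N - outer v v)"
    and W_split: "\<And>z. z \<in> carrier_vec m \<Longrightarrow>
      \<exists>s t. s \<in> carrier_vec M \<and> t \<in> carrier_vec N \<and> s \<bullet> u = 0 \<and> t \<bullet> v = 0 \<and> W *\<^sub>v z = s @\<^sub>v t"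
    and u: "u \<in> carrier_vec M" and v: "v \<in> carrier_vec N"
    and B: "B \<in> carrier_mat (M + N) (M + N)" and r: "r \<in> carrier_vec (M + N)"
    and r_range: "W *\<^sub>v (transpose_mat W *\<^sub>v r) = r"
  defines "B1' \<equiv> transpose_mat W * B * W" and "B1 \<equiv> W * (transpose_mat W * B * W) * transpose_mat W"
    and "r' \<equiv> transpose_mat W *\<^sub>v r"
    and "Proj \<equiv> four_block_mat (1\<^sub>m M - outer u u) (0\<^sub>m M N) (0\<^sub>m N M) (1\<^sub>m N - outer v v)"
  shows "\<forall>s t. s \<in> carrier_vec M \<longrightarrow> t \<in> carrier_vec N \<longrightarrow> s \<bullet> u = 0 \<longrightarrow> t \<bullet> v = 0 \<longrightarrow>
      (Proj * B * Proj *\<^sub>v (s @\<^sub>v t) = - r \<longleftrightarrow> B1 *\<^sub>v (s @\<^sub>v t) = - r) \<and>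
      (B1 *\<^sub>v (s @\<^sub>v t) = - r \<longleftrightarrow> (\<exists>z \<in> carrier_vec m. s @\<^sub>v t = W *\<^sub>v z \<and> B1' *\<^sub>v z = - r'))"
    and "\<forall>z \<in> carrier_vec m. B1' *\<^sub>v z = - r' \<longrightarrow>
      (\<exists>s t. s \<in> carrier_vec M \<and> t \<in> carrier_vec N \<and> s \<bullet> u = 0 \<and> t \<bullet> v = 0 \<and>
        W *\<^sub>v z = s @\<^sub>v t \<and> B1 *\<^sub>v (s @\<^sub>v t) = - r)"
proof -
  note solutions = compressed_system_solutions[OF W WtW B r r_range, folded B1'_def B1_def r'_def]
  have Proj_B_Proj: "Proj * B * Proj = B1"
    using solutions(1) unfolding WWt Proj_def .
  show "\<forall>s t. s \<in> carrier_vec M \<longrightarrow> t \<in> carrier_vec N \<longrightarrow> s \<bullet> u = 0 \<longrightarrow> t \<bullet> v = 0 \<longrightarrow>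
      (Proj * B * Proj *\<^sub>v (s @\<^sub>v t) = - r \<longleftrightarrow> B1 *\<^sub>v (s @\<^sub>v t) = - r) \<and>
      (B1 *\<^sub>v (s @\<^sub>v t) = - r \<longleftrightarrow> (\<exists>z \<in> carrier_vec m. s @\<^sub>v t = W *\<^sub>v z \<and> B1' *\<^sub>v z = - r'))"
    using solutions(3) complement_in_range[OF W WWt u v] unfolding Proj_B_Proj by simp
  show "\<forall>z \<in> carrier_vec m. B1' *\<^sub>v z = - r' \<longrightarrow>
      (\<exists>s t. s \<in> carrier_vec M \<and> t \<in> carrier_vec N \<and> s \<bullet> u = 0 \<and> t \<bullet> v = 0 \<and>
        W *\<^sub>v z = s @\<^sub>v t \<and> B1 *\<^sub>v (s @\<^sub>v t) = - r)"
    using W_split solutions(2) by metis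
qed

lemma singular_triplet_residual_orthogonal:
  fixes A U V :: "real mat"
  assumes A: "A \<in> carrier_mat M N"
    and U: "U \<in> carrier_mat M k" "transpose_mat U * U = 1\<^sub>m k"
    and V: "V \<in> carrier_mat N k" "transpose_mat V * V = 1\<^sub>m k"
    and trip: "singular_triplet (transpose_mat U * A * V) \<theta> c d"
  shows "(A *\<^sub>v (V *\<^sub>v d) - \<theta> \<cdot>\<^sub>v (U *\<^sub>v c)) \<bullet> (U *\<^sub>v c) = 0"
    and "(transpose_mat A *\<^sub>v (U *\<^sub>v c) - \<theta> \<cdot>\<^sub>v (V *\<^sub>v d)) \<bullet> (V *\<^sub>v d) = 0"
proof -
  let ?H = "transpose_mat U * A * V"
  have c: "c \<in> carrier_vec k" and d: "d \<in> carrier_vec k"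
    and Hd: "?H *\<^sub>v d = \<theta> \<cdot>\<^sub>v c" and Htc: "transpose_mat ?H *\<^sub>v c = \<theta> \<cdot>\<^sub>v d"
    using trip U V A unfolding singular_triplet_def by auto
  have cc: "c \<bullet> c = 1" and dd: "d \<bullet> d = 1"
    using trip unfolding singular_triplet_def vnorm_eq_1_iff by auto
  have uu: "(U *\<^sub>v c) \<bullet> (U *\<^sub>v c) = 1" and vv: "(V *\<^sub>v d) \<bullet> (V *\<^sub>v d) = 1"
    using isometry_vnorm[OF U c] isometry_vnorm[OF V d] trip
    unfolding singular_triplet_def vnorm_eq_1_iff[symmetric] by auto
  have Ht: "transpose_mat ?H = transpose_mat V * transpose_mat A * U"
    using transpose_mult[of "transpose_mat U * A" k N V k] transpose_mult[of "transpose_mat U" k M A N] U V A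
    by (simp add: assoc_mult_mat[of _ k N _ M _ k])
  have "(A *\<^sub>v (V *\<^sub>v d)) \<bullet> (U *\<^sub>v c) = (transpose_mat U *\<^sub>v (A *\<^sub>v (V *\<^sub>v d))) \<bullet> c"
    using transpose_vec_mult_scalar[OF U(1) c, of "A *\<^sub>v (V *\<^sub>v d)"] A V d by simp
  also have "transpose_mat U *\<^sub>v (A *\<^sub>v (V *\<^sub>v d)) = ?H *\<^sub>v d"
    using assoc_mult_mat_vec[of "transpose_mat U" k M A N "V *\<^sub>v d"]
      assoc_mult_mat_vec[of "transpose_mat U * A" k N V k d] U A V d by simp
  finally have uAv: "(A *\<^sub>v (V *\<^sub>v d)) \<bullet> (U *\<^sub>v c) = \<theta>"
    using Hd cc c by simp
  have "(transpose_mat A *\<^sub>v (U *\<^sub>v c)) \<bullet> (V *\<^sub>v d) = (transpose_mat V *\<^sub>v (transpose_mat A *\<^sub>v (U *\<^sub>v c))) \<bullet> d"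
    using transpose_vec_mult_scalar[OF V(1) d, of "transpose_mat A *\<^sub>v (U *\<^sub>v c)"] A U c by simp
  also have "transpose_mat V *\<^sub>v (transpose_mat A *\<^sub>v (U *\<^sub>v c)) = transpose_mat ?H *\<^sub>v c"
    unfolding Ht using assoc_mult_mat_vec[of "transpose_mat V" k N "transpose_mat A" M "U *\<^sub>v c"]
      assoc_mult_mat_vec[of "transpose_mat V * transpose_mat A" k M U k c] U A V c by simp
  finally have vAu: "(transpose_mat A *\<^sub>v (U *\<^sub>v c)) \<bullet> (V *\<^sub>v d) = \<theta>"
    using Htc dd d by simp
  show "(A *\<^sub>v (V *\<^sub>v d) - \<theta> \<cdot>\<^sub>v (U *\<^sub>v c)) \<bullet> (U *\<^sub>v c) = 0"
    using uAv uu U A V c d by (subst minus_scalar_prod_distrib[of _ M]) auto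
  show "(transpose_mat A *\<^sub>v (U *\<^sub>v c) - \<theta> \<cdot>\<^sub>v (V *\<^sub>v d)) \<bullet> (V *\<^sub>v d) = 0"
    using vAu vv U A V c d by (subst minus_scalar_prod_distrib[of _ N]) auto
qed

theorem theorem3p1:
  fixes M N k :: nat and \<tau> \<theta>1 :: real
    and A U V P1 Q1 :: "real mat" and c1 d1 w0 z0 :: "real vec"
  assumes A: "A \<in> carrier_mat M N" and MN: "M \<ge> N" and tau: "\<tau> \<ge> 0"
    and U: "U \<in> carrier_mat M k" "transpose_mat U * U = 1\<^sub>m k"
    and V: "V \<in> carrier_mat N k" "transpose_mat V * V = 1\<^sub>m k"
    and trip: "singular_triplet (transpose_mat U * A * V) \<theta>1 c1 d1"
    and closest: "\<forall>\<sigma> \<in> singular_values (transpose_mat U * A * V). \<bar>\<theta>1 - \<tau>\<bar> \<le> \<bar>\<sigma> - \<tau>\<bar>"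
    and P1: "P1 \<in> carrier_mat M (M - 1)"
    and Q1: "Q1 \<in> carrier_mat N (N - 1)"
    and orthP: "transpose_mat (mat_of_cols M (U *\<^sub>v c1 # cols P1)) * mat_of_cols M (U *\<^sub>v c1 # cols P1) = 1\<^sub>m M"
    and orthQ: "transpose_mat (mat_of_cols N (V *\<^sub>v d1 # cols Q1)) * mat_of_cols N (V *\<^sub>v d1 # cols Q1) = 1\<^sub>m N"
    and w0: "w0 \<in> carrier_vec (M + N)" and z0: "z0 \<in> carrier_vec (M + N - 2)"
    and w0z0: "w0 = four_block_mat P1 (0\<^sub>m M (N - 1)) (0\<^sub>m N (M - 1)) Q1 *\<^sub>v z0"
  shows
   "let B = four_block_mat ((-\<tau>) \<cdot>\<^sub>m 1\<^sub>m M) A (transpose_mat A) ((-\<tau>) \<cdot>\<^sub>m 1\<^sub>m N);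
        u1 = U *\<^sub>v c1; v1 = V *\<^sub>v d1;
        r = (A *\<^sub>v v1 - \<theta>1 \<cdot>\<^sub>v u1) @\<^sub>v (transpose_mat A *\<^sub>v u1 - \<theta>1 \<cdot>\<^sub>v v1);
        W1 = four_block_mat P1 (0\<^sub>m M (N - 1)) (0\<^sub>m N (M - 1)) Q1;
        B1' = transpose_mat W1 * B * W1;
        B1 = W1 * B1' * transpose_mat W1;
        r' = transpose_mat W1 *\<^sub>v r;
        Pi = four_block_mat (1\<^sub>m M - outer u1 u1) (0\<^sub>m M N) (0\<^sub>m N M) (1\<^sub>m N - outer v1 v1)
    in B1' = four_block_mat ((-\<tau>) \<cdot>\<^sub>m 1\<^sub>m (M - 1)) (transpose_mat P1 * A * Q1)
                            (transpose_mat Q1 * transpose_mat A * P1) ((-\<tau>) \<cdot>\<^sub>m 1\<^sub>m (N - 1))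
     \<and> (\<forall>s t. s \<in> carrier_vec M \<longrightarrow> t \<in> carrier_vec N \<longrightarrow> s \<bullet> u1 = 0 \<longrightarrow> t \<bullet> v1 = 0 \<longrightarrow>
          (Pi * B * Pi *\<^sub>v (s @\<^sub>v t) = - r \<longleftrightarrow> B1 *\<^sub>v (s @\<^sub>v t) = - r) \<and>
          (B1 *\<^sub>v (s @\<^sub>v t) = - r \<longleftrightarrow>
             (\<exists>z \<in> carrier_vec (M + N - 2). s @\<^sub>v t = W1 *\<^sub>v z \<and> B1' *\<^sub>v z = - r')))
     \<and> (\<forall>z \<in> carrier_vec (M + N - 2). B1' *\<^sub>v z = - r' \<longrightarrow>
          (\<exists>s t. s \<in> carrier_vec M \<and> t \<in> carrier_vec N \<and> s \<bullet> u1 = 0 \<and> t \<bullet> v1 = 0 \<and>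
                 W1 *\<^sub>v z = s @\<^sub>v t \<and> B1 *\<^sub>v (s @\<^sub>v t) = - r))
     \<and> (\<forall>j \<in> {1..M + N - 2}.
          (\<forall>z. minres_iterate B1' r' z0 j z \<longrightarrow> minres_iterate B1 r w0 j (W1 *\<^sub>v z)) \<and>
          (\<forall>w. minres_iterate B1 r w0 j w \<longrightarrow> (\<exists>z. minres_iterate B1' r' z0 j z \<and> w = W1 *\<^sub>v z)))
     \<and> (\<forall>j \<in> {0..M + N - 2}. \<forall>w z. minres_iterate B1 r w0 j w \<longrightarrow> minres_iterate B1' r' z0 j z \<longrightarrow>
          vnorm (B1 *\<^sub>v w + r) = vnorm (B1' *\<^sub>v z + r'))"
proof -
  have u1: "U *\<^sub>v c1 \<in> carrier_vec M" and v1: "V *\<^sub>v d1 \<in> carrier_vec N"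
    using trip U V A unfolding singular_triplet_def by auto
  note basis = deflation_basis[OF u1 P1 orthP v1 Q1 orthQ]
  let ?B = "four_block_mat ((-\<tau>) \<cdot>\<^sub>m 1\<^sub>m M) A (transpose_mat A) ((-\<tau>) \<cdot>\<^sub>m 1\<^sub>m N)"
  let ?r = "(A *\<^sub>v (V *\<^sub>v d1) - \<theta>1 \<cdot>\<^sub>v (U *\<^sub>v c1)) @\<^sub>v (transpose_mat A *\<^sub>v (U *\<^sub>v c1) - \<theta>1 \<cdot>\<^sub>v (V *\<^sub>v d1))"
  have B: "?B \<in> carrier_mat (M + N) (M + N)" and r: "?r \<in> carrier_vec (M + N)"
    using A u1 v1 by auto
  have r_range: "four_block_mat P1 (0\<^sub>m M (N - 1)) (0\<^sub>m N (M - 1)) Q1 *\<^sub>v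
      (transpose_mat (four_block_mat P1 (0\<^sub>m M (N - 1)) (0\<^sub>m N (M - 1)) Q1) *\<^sub>v ?r) = ?r"
    using complement_in_range[OF basis(1,3) u1 v1 _ _ singular_triplet_residual_orthogonal[OF A U V trip]]
      A u1 v1 by simp
  show ?thesis
    unfolding Let_def w0z0
    using saddle_block_compression[OF A P1 Q1 orthogonal_completion(3)[OF u1 P1 orthP]
        orthogonal_completion(3)[OF v1 Q1 orthQ]]
      projected_correction_equation[OF basis(1-4) u1 v1 B r r_range]
      compressed_minres[OF basis(1,2) B r r_range z0]
    by blast
qed

end
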